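(* Let $M=2$ and let the two users' locations $(x_1,y_1,0)$ and $(x_2,y_2,0)$ be independent and uniformly distributed on the rectangle $[-\frac{D_{\rm L}}{2},\frac{D_{\rm L}}{2}]\times[-\frac{D_{\rm W}}{2},\frac{D_{\rm W}}{2}]$ (so all four coordinates are independent uniform). Let $d>0$, $\eta>0$, $\sigma^2>0$, $R>0$, $\bar P>0$, $\epsilon=\frac{\sigma^2}{\eta}(e^{2R}-1)$, $\tau_m=\epsilon(y_m^2+d^2)$, $x^*=\frac{x_1+x_2}{2}$, and define for $m\in\{1,2\}$ the power outage probability $$\mathbb{P}^{\rm o}_m=\mathbb{P}\left(\epsilon(x^*-x_m)^2+\tau_m\ge\bar P\right).$$ If $\frac{\bar P}{\epsilon}>d^2$, then $$\mathbb{P}^{\rm o}_m=\frac{2}{D_{\rm W}}\left(\frac{D_{\rm W}}{2}-\min\left\{\frac{D_{\rm W}}{2},\sqrt{\frac{\theta_1D_{\rm L}^2}{4}}\right\}\right)+\frac{2}{D_{\rm W}}\big(g(\theta_2)-g(\theta_3)\big),$$ and otherwise $\mathbb{P}^{\rm o}_m=1$. Here $\theta_1=\frac{4}{D_{\rm L}^2}\left(\frac{\bar P}{\epsilon}-d^2\right)$, $\theta_2=\min\left\{\frac{D_{\rm W}}{2},\sqrt{\frac{D_{\rm L}^2}{4}\theta_1}\right\}$, $\theta_3=\sqrt{\max\left\{0,\frac{D_{\rm L}^2}{4}(\theta_1-1)\right\}}$, $\theta_4=\frac{D_{\rm L}^2}{4}\theta_1$, and, if $\theta_2\ge\theta_3$,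 $$g(y)=y+\theta_1y-\frac{4}{3D_{\rm L}^2}y^3-\frac{4}{D_{\rm L}}\left(\frac{y}{2}\sqrt{\theta_4-y^2}+\frac{\theta_4}{2}\sin^{-1}\!\left(\frac{y}{\sqrt{\theta_4}}\right)\right),$$ while $g(y)=0$ if $\theta_2<\theta_3$.
   Context: Interpretation: two-user TDMA pinching-antenna system with the antenna at the location $x^*=\frac{x_1+x_2}{2}$ on a waveguide at height $d$, user $m$ requiring power $\epsilon(x^*-x_m)^2+\tau_m$ to achieve rate $R$; $\bar P$ is a per-user power budget. $\eta=\frac{c^2}{16\pi^2f_c^2}$, $\sigma^2$ is noise power. *)

theory Defs
  imports "HOL-Probability.Probability"
begin

definition user_space :: "real \<Rightarrow> real \<Rightarrow> (real \<times> real \<times> real \<times> real) measure" where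
  "user_space DL DW =
     (let Ux = uniform_measure lborel {-DL/2..DL/2};
          Uy = uniform_measure lborel {-DW/2..DW/2}
      in Ux \<Otimes>\<^sub>M (Uy \<Otimes>\<^sub>M (Ux \<Otimes>\<^sub>M Uy)))"

definition xpos :: "nat \<Rightarrow> real \<times> real \<times> real \<times> real \<Rightarrow> real" where
  "xpos m \<omega> = (case \<omega> of (x1, y1, x2, y2) \<Rightarrow> if m = 1 then x1 else x2)"

definition ypos :: "nat \<Rightarrow> real \<times> real \<times> real \<times> real \<Rightarrow> real" where
  "ypos m \<omega> = (case \<omega> of (x1, y1, x2, y2) \<Rightarrow> if m = 1 then y1 else y2)"

definition outage_prob ::
  "real \<Rightarrow> real \<Rightarrow> real \<Rightarrow> real \<Rightarrow> real \<Rightarrow> real \<Rightarrow> real \<Rightarrow> nat \<Rightarrow> real" where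
  "outage_prob DL DW d eta sigma2 R Pbar (m::nat) =
     (let eps = sigma2 / eta * (exp (2 * R) - 1) in
      measure (user_space DL DW)
        {\<omega> \<in> space (user_space DL DW).
           (let xs = (xpos 1 \<omega> + xpos 2 \<omega>) / 2;
                tau = eps * ((ypos m \<omega>)\<^sup>2 + d\<^sup>2)
            in eps * (xs - xpos m \<omega>)\<^sup>2 + tau \<ge> Pbar)})"

definition gfun :: "real \<Rightarrow> real \<Rightarrow> real \<Rightarrow> real \<Rightarrow> real \<Rightarrow> real \<Rightarrow> real" where
  "gfun DL th1 th2 th3 th4 y =
     (if th2 \<ge> th3 then
        y + th1 * y - 4 / (3 * DL\<^sup>2) * y ^ 3
          - 4 / DL * (y / 2 * sqrt (th4 - y\<^sup>2) + th4 / 2 * arcsin (y / sqrt th4))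
      else 0)"

end

theory Submission
  imports Defs
begin

(*
  With K = Pbar/eps - d^2, the outage event of either user is K \<le> ((x1 - x2)/2)^2 + y_m^2, because the
  antenna at the midpoint is at horizontal distance |x1 - x2|/2 from both users.  For fixed y_m = y, two
  independent uniform points of [-L, L] (L = D_L/2) are at distance at least 2 sqrt c, c = K - y^2 > 0,
  with probability (1 - sqrt c / L)_+^2, obtained by integrating the length of
  {x2 \<in> [-L, L]. |x1 - x2| \<ge> 2 sqrt c} over x1.  As a function of y this conditional probability is
  0 for |y| < \<theta>3, equals (1 - sqrt (K - y^2) / L)^2 for \<theta>3 \<le> |y| < sqrt K, and is 1 beyond, and
  the paper's g is a primitive of the middle piece; averaging over y uniform on [-D_W/2, D_W/2] with the
  fundamental theorem of calculus and the oddness of g gives the closed form.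
*)

lemma abs_less_sqrt_iff: "\<bar>y\<bar> < sqrt c \<longleftrightarrow> y\<^sup>2 < c"
  by (metis real_sqrt_abs real_sqrt_less_iff)

lemma DERIV_max_zero:
  fixes f :: "real \<Rightarrow> real"
  assumes f: "(f has_real_derivative D) (at x)" and nz: "f x \<noteq> 0"
  shows "((\<lambda>t. max 0 (f t)) has_real_derivative (if 0 < f x then D else 0)) (at x)"
proof -
  have "(f \<longlongrightarrow> f x) (nhds x)"
    using DERIV_isCont[OF f] by (simp add: isCont_def tendsto_at_iff_tendsto_nhds)
  then have sign: "eventually (\<lambda>t. 0 < f t) (nhds x) \<or> eventually (\<lambda>t. f t < 0) (nhds x)"
    using nz by (metis linorder_neqE_linordered_idom order_tendstoD)
  show ?thesis
  proof (cases "0 < f x")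
    case True
    with sign have "eventually (\<lambda>t. 0 < f t) (nhds x)"
      using eventually_nhds_x_imp_x by fastforce
    then have "eventually (\<lambda>t. max 0 (f t) = f t) (nhds x)"
      by (rule eventually_mono) simp
    then show ?thesis using f True by (subst DERIV_cong_ev[OF refl _ refl]) auto
  next
    case False
    with sign nz have "eventually (\<lambda>t. f t < 0) (nhds x)"
      using eventually_nhds_x_imp_x by fastforce
    then have "eventually (\<lambda>t. max 0 (f t) = 0) (nhds x)"
      by (rule eventually_mono) simp
    then show ?thesis using False by (subst DERIV_cong_ev[OF refl _ refl]) auto
  qed
qed

lemma DERIV_max_zero_power2:
  fixes f :: "real \<Rightarrow> real"
  assumes f: "(f has_real_derivative D) (at x)" and nz: "f x \<noteq> 0"
  shows "((\<lambda>t. (max 0 (f t))\<^sup>2) has_real_derivative 2 * max 0 (f x) * D) (at x)"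
proof -
  have "((\<lambda>t. (max 0 (f t))\<^sup>2) has_real_derivative
          of_nat 2 * ((if 0 < f x then D else 0) * max 0 (f x) ^ (2 - Suc 0))) (at x)"
    by (intro DERIV_power DERIV_max_zero f nz)
  then show ?thesis
    by (rule DERIV_cong) (use nz in \<open>auto simp: max_def\<close>)
qed

lemma DERIV_clamp_comp:
  fixes G G' :: "real \<Rightarrow> real"
  assumes ab: "a < b" and x: "x \<noteq> a" "x \<noteq> b"
    and G: "\<And>t. a < t \<Longrightarrow> t < b \<Longrightarrow> (G has_real_derivative G' t) (at t)"
  shows "((\<lambda>t. G (max a (min t b))) has_real_derivative (if a < x \<and> x < b then G' x else 0)) (at x)"
proof -
  consider "x < a" | "a < x" "x < b" | "b < x" using x by linarith
  then show ?thesis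
  proof cases
    case 1
    then have "((\<lambda>t. G a) has_real_derivative (if a < x \<and> x < b then G' x else 0)) (at x)"
      by simp
    then show ?thesis
      by (rule has_field_derivative_transform_within_open[where S = "{..<a}"]) (use 1 ab in auto)
  next
    case 2
    then have "(G has_real_derivative (if a < x \<and> x < b then G' x else 0)) (at x)"
      using G by simp
    then show ?thesis
      by (rule has_field_derivative_transform_within_open[where S = "{a<..<b}"]) (use 2 in auto)
  next
    case 3
    then have "((\<lambda>t. G b) has_real_derivative (if a < x \<and> x < b then G' x else 0)) (at x)"
      by simp
    then show ?thesis
      by (rule has_field_derivative_transform_within_open[where S = "{b<..}"]) (use 3 ab in auto)
  qed
qed

lemma continuous_on_clamp_comp:
  fixes G :: "real \<Rightarrow> real"
  assumes G: "continuous_on {a..b} G" and ab: "a \<le> b"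
  shows "continuous_on S (\<lambda>y. G (max a (min y b)))"
proof (rule continuous_on_compose2[OF G])
  show "continuous_on S (\<lambda>y. max a (min y b))"
    by (intro continuous_intros)
  show "(\<lambda>y. max a (min y b)) ` S \<subseteq> {a..b}"
    using ab by auto
qed

lemma DERIV_sqrt_circle_primitive:
  fixes K y :: real
  assumes y: "\<bar>y\<bar> < sqrt K"
  shows "((\<lambda>t. t / 2 * sqrt (K - t\<^sup>2) + K / 2 * arcsin (t / sqrt K))
            has_real_derivative sqrt (K - y\<^sup>2)) (at y)"
proof -
  define s where "s = sqrt (K - y\<^sup>2)"
  have rK: "0 < sqrt K" using y by linarith
  have "y\<^sup>2 < K"
    using y abs_less_sqrt_iff by blast
  then have s: "0 < s" "s\<^sup>2 = K - y\<^sup>2" by (auto simp: s_def)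
  have unit: "-1 < y / sqrt K" "y / sqrt K < 1"
    using y rK by (auto simp: field_simps abs_less_iff)
  have "sqrt (1 - (y / sqrt K)\<^sup>2) = s / sqrt K"
    using s rK by (simp add: power_divide field_simps real_sqrt_divide s_def)
  moreover have "((\<lambda>t. arcsin (t / sqrt K)) has_real_derivative
      inverse (sqrt (1 - (y / sqrt K)\<^sup>2)) * (1 / sqrt K)) (at y)"
    by (rule DERIV_chain2[of arcsin]) (simp_all add: DERIV_arcsin unit DERIV_cdivide[OF DERIV_ident])
  ultimately have arc: "((\<lambda>t. arcsin (t / sqrt K)) has_real_derivative 1 / s) (at y)"
    using s rK by simp
  have root: "((\<lambda>t. sqrt (K - t\<^sup>2)) has_real_derivative - y / s) (at y)"
    using s unfolding s_def by (auto intro!: derivative_eq_intros simp: field_simps)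
  have "((\<lambda>t. t / 2 * sqrt (K - t\<^sup>2) + K / 2 * arcsin (t / sqrt K)) has_real_derivative
      1 / 2 * sqrt (K - y\<^sup>2) + - y / s * (y / 2) + K / 2 * (1 / s)) (at y)"
    by (intro DERIV_add DERIV_mult DERIV_cmult DERIV_cdivide DERIV_ident root arc)
  moreover have "1 / 2 * sqrt (K - y\<^sup>2) + - y / s * (y / 2) + K / 2 * (1 / s) = s"
    unfolding s_def[symmetric] using s by (simp add: field_simps power2_eq_square)
  ultimately show ?thesis unfolding s_def[symmetric] by simp
qed

lemma divide_sqrt_in_unit_interval:
  fixes y K :: real
  assumes "\<bar>y\<bar> \<le> sqrt K"
  shows "y / sqrt K \<in> {-1..1}"
proof (cases "sqrt K = 0")
  case False
  with assms have "0 < sqrt K" by linarith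
  with assms show ?thesis by (auto simp: abs_le_iff divide_le_eq le_divide_eq)
qed simp

lemma nn_integral_nested_pair_measure:
  assumes B: "sigma_finite_measure B" and C: "sigma_finite_measure C"
    and D: "sigma_finite_measure D" and f: "f \<in> borel_measurable (A \<Otimes>\<^sub>M (B \<Otimes>\<^sub>M (C \<Otimes>\<^sub>M D)))"
  shows "integral\<^sup>N (A \<Otimes>\<^sub>M (B \<Otimes>\<^sub>M (C \<Otimes>\<^sub>M D))) f
           = (\<integral>\<^sup>+a. \<integral>\<^sup>+b. \<integral>\<^sup>+c. \<integral>\<^sup>+d. f (a, b, c, d) \<partial>D \<partial>C \<partial>B \<partial>A)"
proof -
  have CD: "sigma_finite_measure (C \<Otimes>\<^sub>M D)"
    by (rule sigma_finite_pair_measure[OF C D])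
  have BCD: "sigma_finite_measure (B \<Otimes>\<^sub>M (C \<Otimes>\<^sub>M D))"
    by (rule sigma_finite_pair_measure[OF B CD])
  have "integral\<^sup>N (A \<Otimes>\<^sub>M (B \<Otimes>\<^sub>M (C \<Otimes>\<^sub>M D))) f
      = (\<integral>\<^sup>+a. \<integral>\<^sup>+r. f (a, r) \<partial>(B \<Otimes>\<^sub>M (C \<Otimes>\<^sub>M D)) \<partial>A)"
    by (rule sigma_finite_measure.nn_integral_fst[OF BCD f, symmetric])
  also have "\<dots> = (\<integral>\<^sup>+a. \<integral>\<^sup>+b. \<integral>\<^sup>+s. f (a, b, s) \<partial>(C \<Otimes>\<^sub>M D) \<partial>B \<partial>A)"
    using f by (intro nn_integral_cong sigma_finite_measure.nn_integral_fst[OF CD, symmetric]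
        measurable_compose_Pair1)
  also have "\<dots> = (\<integral>\<^sup>+a. \<integral>\<^sup>+b. \<integral>\<^sup>+c. \<integral>\<^sup>+d. f (a, b, c, d) \<partial>D \<partial>C \<partial>B \<partial>A)"
    using f by (intro nn_integral_cong sigma_finite_measure.nn_integral_fst[OF D, symmetric]
        measurable_compose_Pair1)
  finally show ?thesis .
qed

lemma nn_integral_of_bool:
  assumes "{x \<in> space M. P x} \<in> sets M"
  shows "(\<integral>\<^sup>+x. of_bool (P x) \<partial>M) = emeasure M {x \<in> space M. P x}"
proof -
  have "(\<integral>\<^sup>+x. of_bool (P x) \<partial>M) = (\<integral>\<^sup>+x. indicator {x \<in> space M. P x} x \<partial>M)"
    by (intro nn_integral_cong) (simp add: indicator_def)
  then show ?thesis
    using assms by simp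
qed

lemma emeasure_uniform_dist_ge:
  fixes L s x :: real
  assumes L: "0 < L" and s: "0 < s" and x: "x \<in> {-L..L}"
  shows "emeasure (uniform_measure lborel {-L..L}) {y. s \<le> \<bar>x - y\<bar>}
           = ennreal ((max 0 (x + L - s) + max 0 (L - x - s)) / (2 * L))"
proof -
  have parts: "{-L..L} \<inter> {y. s \<le> \<bar>x - y\<bar>} = {-L..x - s} \<union> {x + s..L}"
    using x s by auto
  have "emeasure lborel ({-L..x - s} \<union> {x + s..L})
          = emeasure lborel {-L..x - s} + emeasure lborel {x + s..L}"
    using s by (intro plus_emeasure[symmetric]) auto
  also have "\<dots> = ennreal (max 0 (x + L - s)) + ennreal (max 0 (L - x - s))"
    by (simp add: emeasure_lborel_Icc_eq max_def algebra_simps)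
  also have "\<dots> = ennreal (max 0 (x + L - s) + max 0 (L - x - s))"
    by simp
  finally have "emeasure (uniform_measure lborel {-L..L}) {y. s \<le> \<bar>x - y\<bar>}
      = ennreal (max 0 (x + L - s) + max 0 (L - x - s)) / ennreal (2 * L)"
    using L by (simp add: parts)
  also have "\<dots> = ennreal ((max 0 (x + L - s) + max 0 (L - x - s)) / (2 * L))"
    using L by (intro divide_ennreal) auto
  finally show ?thesis .
qed

lemma has_integral_dist_ge_length:
  fixes L s :: real
  assumes L: "0 < L" and s: "0 < s"
  shows "((\<lambda>x. max 0 (x + L - s) + max 0 (L - x - s)) has_integral (max 0 (2 * L - s))\<^sup>2) {-L..L}"
proof -
  define F where "F x = ((max 0 (x + L - s))\<^sup>2 - (max 0 (L - s - x))\<^sup>2) / 2" for x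
  have "((\<lambda>x. max 0 (x + L - s) + max 0 (L - x - s)) has_integral F L - F (-L)) {-L..L}"
  proof (rule fundamental_theorem_of_calculus_interior_strong[where S = "{s - L, L - s}"])
    show "continuous_on {-L..L} F"
      unfolding F_def by (intro continuous_intros) auto
    fix x assume x: "x \<in> {-L<..<L} - {s - L, L - s}"
    have "(F has_real_derivative (2 * max 0 (x + L - s) * 1 - 2 * max 0 (L - s - x) * (-1)) / 2) (at x)"
      unfolding F_def using x
      by (intro DERIV_cdivide DERIV_diff DERIV_max_zero_power2) (auto intro!: derivative_eq_intros)
    then have "(F has_real_derivative max 0 (x + L - s) + max 0 (L - x - s)) (at x)"
      by (rule DERIV_cong) (simp add: algebra_simps)
    then show "(F has_vector_derivative max 0 (x + L - s) + max 0 (L - x - s)) (at x)"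
      by (simp add: has_real_derivative_iff_has_vector_derivative)
  qed (use L in auto)
  also have "F L - F (-L) = (max 0 (2 * L - s))\<^sup>2"
    unfolding F_def using s by (simp add: max_def)
  finally show ?thesis .
qed

lemma nn_integral_uniform_dist_ge:
  fixes L s :: real
  assumes L: "0 < L" and s: "0 < s"
  shows "(\<integral>\<^sup>+x. emeasure (uniform_measure lborel {-L..L}) {y. s \<le> \<bar>x - y\<bar>} \<partial>uniform_measure lborel {-L..L})
           = ennreal ((max 0 (1 - s / (2 * L)))\<^sup>2)"
proof -
  define \<phi> where "\<phi> x = (max 0 (x + L - s) + max 0 (L - x - s)) / (2 * L)" for x
  have "(\<integral>\<^sup>+x. emeasure (uniform_measure lborel {-L..L}) {y. s \<le> \<bar>x - y\<bar>} \<partial>uniform_measure lborel {-L..L})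
      = (\<integral>\<^sup>+x. ennreal (\<phi> x) \<partial>uniform_measure lborel {-L..L})"
    using emeasure_uniform_dist_ge[OF L s]
    by (intro nn_integral_cong_AE AE_uniform_measureI AE_I2 impI) (simp_all add: \<phi>_def)
  also have "\<dots> = (\<integral>\<^sup>+x. ennreal (\<phi> x) * indicator {-L..L} x \<partial>lborel) / emeasure lborel {-L..L}"
    by (rule nn_integral_uniform_measure) (auto simp: \<phi>_def)
  also have "(\<integral>\<^sup>+x. ennreal (\<phi> x) * indicator {-L..L} x \<partial>lborel) = ennreal ((max 0 (2 * L - s))\<^sup>2 / (2 * L))"
    using has_integral_divide[OF has_integral_dist_ge_length[OF L s], of "2 * L"] L
    by (intro nn_integral_has_integral_lebesgue') (auto simp: \<phi>_def)
  also have "\<dots> / emeasure lborel {-L..L} = ennreal ((max 0 (2 * L - s))\<^sup>2 / (2 * L) / (2 * L))"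
    using L by (simp add: divide_ennreal)
  also have "(max 0 (2 * L - s))\<^sup>2 / (2 * L) / (2 * L) = (max 0 (1 - s / (2 * L)))\<^sup>2"
  proof -
    have "max 0 (2 * L - s) = 2 * L * max 0 (1 - s / (2 * L))"
      using L by (simp add: max_def field_simps)
    then show ?thesis
      using L by (simp add: power_mult_distrib power2_eq_square)
  qed
  finally show ?thesis .
qed

definition half_gap_tail :: "real \<Rightarrow> real \<Rightarrow> real" where
  "half_gap_tail L c = (if c \<le> 0 then 1 else (max 0 (1 - sqrt c / L))\<^sup>2)"

lemma nn_integral_uniform_half_gap_tail:
  fixes L c :: real
  assumes L: "0 < L"
  shows "(\<integral>\<^sup>+x. \<integral>\<^sup>+y. of_bool (c \<le> ((x - y) / 2)\<^sup>2) \<partial>uniform_measure lborel {-L..L} \<partial>uniform_measure lborel {-L..L})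
           = ennreal (half_gap_tail L c)"
proof -
  let ?U = "uniform_measure lborel {-L..L}"
  have sets: "{y \<in> space ?U. c \<le> ((x - y) / 2)\<^sup>2} \<in> sets ?U" for x
    by measurable
  have slice: "(\<integral>\<^sup>+y. of_bool (c \<le> ((x - y) / 2)\<^sup>2) \<partial>?U) = emeasure ?U {y. c \<le> ((x - y) / 2)\<^sup>2}" for x
    using nn_integral_of_bool[OF sets[of x]] by simp
  show ?thesis
    unfolding slice
  proof (cases "c \<le> 0")
    case True
    interpret prob_space ?U
      using L by (intro prob_space_uniform_measure) auto
    have "{y. c \<le> ((x - y) / 2)\<^sup>2} = space ?U" for x
      using True by (auto intro: order_trans[OF _ zero_le_power2])
    then show "(\<integral>\<^sup>+x. emeasure ?U {y. c \<le> ((x - y) / 2)\<^sup>2} \<partial>?U) = ennreal (half_gap_tail L c)"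
      using True emeasure_space_1 by (simp add: half_gap_tail_def del: emeasure_uniform_measure)
  next
    case False
    have "c \<le> ((x - y) / 2)\<^sup>2 \<longleftrightarrow> 2 * sqrt c \<le> \<bar>x - y\<bar>" for x y
      using False real_sqrt_le_iff[of c "((x - y) / 2)\<^sup>2"] by (auto simp: abs_div)
    then show "(\<integral>\<^sup>+x. emeasure ?U {y. c \<le> ((x - y) / 2)\<^sup>2} \<partial>?U) = ennreal (half_gap_tail L c)"
      using False nn_integral_uniform_dist_ge[OF L, of "2 * sqrt c"]
      by (simp add: half_gap_tail_def)
  qed
qed

lemma half_gap_tail_nonneg: "0 \<le> half_gap_tail L c"
  by (simp add: half_gap_tail_def)

lemma half_gap_tail_diff_sq:
  fixes L K y :: real
  assumes L: "0 < L"
  shows "half_gap_tail L (K - y\<^sup>2) =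
           (if \<bar>y\<bar> < sqrt (max 0 (K - L\<^sup>2)) then 0
            else if \<bar>y\<bar> < sqrt K then (1 - sqrt (K - y\<^sup>2) / L)\<^sup>2 else 1)"
proof -
  have inner: "\<bar>y\<bar> < sqrt (max 0 (K - L\<^sup>2)) \<longleftrightarrow> L\<^sup>2 < K - y\<^sup>2"
    unfolding abs_less_sqrt_iff using zero_le_power2[of y] by linarith
  have outer: "\<bar>y\<bar> < sqrt K \<longleftrightarrow> 0 < K - y\<^sup>2"
    unfolding abs_less_sqrt_iff by linarith
  have "sqrt (K - y\<^sup>2) \<le> L \<longleftrightarrow> K - y\<^sup>2 \<le> L\<^sup>2"
    using L by (metis abs_of_pos real_sqrt_abs real_sqrt_le_iff)
  then have "max 0 (1 - sqrt (K - y\<^sup>2) / L) = (if L\<^sup>2 < K - y\<^sup>2 then 0 else 1 - sqrt (K - y\<^sup>2) / L)"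
    using L by (auto simp: max_def field_simps)
  moreover have "L\<^sup>2 < K - y\<^sup>2 \<Longrightarrow> 0 < K - y\<^sup>2"
    using zero_le_power2[of L] by linarith
  ultimately show ?thesis
    unfolding half_gap_tail_def inner outer by auto
qed

text \<open>The function g of the paper, for D_L = 2 L and \<theta>4 = K (hence \<theta>1 = K / L^2).\<close>
definition g_primitive :: "real \<Rightarrow> real \<Rightarrow> real \<Rightarrow> real" where
  "g_primitive L K y = y + K / L\<^sup>2 * y - y ^ 3 / (3 * L\<^sup>2)
     - 2 / L * (y / 2 * sqrt (K - y\<^sup>2) + K / 2 * arcsin (y / sqrt K))"

lemma DERIV_g_primitive:
  fixes L K y :: real
  assumes L: "L \<noteq> 0" and y: "\<bar>y\<bar> < sqrt K"
  shows "(g_primitive L K has_real_derivative (1 - sqrt (K - y\<^sup>2) / L)\<^sup>2) (at y)"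
proof -
  have "y\<^sup>2 < K"
    using y abs_less_sqrt_iff by blast
  define s where "s = sqrt (K - y\<^sup>2)"
  then have K: "K = s\<^sup>2 + y\<^sup>2"
    using \<open>y\<^sup>2 < K\<close> by simp
  have "(g_primitive L K has_real_derivative
      1 + K / L\<^sup>2 * 1 - of_nat 3 * (1 * y ^ (3 - Suc 0)) / (3 * L\<^sup>2) - 2 / L * s) (at y)"
    unfolding g_primitive_def[abs_def] s_def
    by (intro DERIV_diff DERIV_add DERIV_ident DERIV_cmult DERIV_cdivide DERIV_power
          DERIV_sqrt_circle_primitive y)
  moreover have "1 + K / L\<^sup>2 * 1 - of_nat 3 * (1 * y ^ (3 - Suc 0)) / (3 * L\<^sup>2) - 2 / L * s
      = (1 - s / L)\<^sup>2"
    unfolding K using L by (simp add: field_simps power2_eq_square)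
  ultimately show ?thesis unfolding s_def[symmetric] by simp
qed

lemma g_primitive_minus:
  assumes "\<bar>y\<bar> \<le> sqrt K"
  shows "g_primitive L K (-y) = - g_primitive L K y"
proof -
  have "arcsin (- (y / sqrt K)) = - arcsin (y / sqrt K)"
    using divide_sqrt_in_unit_interval[OF assms] by (intro arcsin_minus) auto
  then show ?thesis
    unfolding g_primitive_def by (simp add: algebra_simps)
qed

lemma continuous_on_g_primitive:
  assumes "0 < K" "L \<noteq> 0"
  shows "continuous_on {-sqrt K..sqrt K} (g_primitive L K)"
proof -
  have bound: "\<forall>y\<in>{-sqrt K..sqrt K}. -1 \<le> y / sqrt K \<and> y / sqrt K \<le> 1"
    using divide_sqrt_in_unit_interval by auto
  show ?thesis
    unfolding g_primitive_def by (intro continuous_intros bound) (use assms in auto)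
qed

text \<open>Clamping glues g, the primitive on \<theta>3 \<le> |y| \<le> sqrt K, to the pieces of slope 0 inside
  and slope 1 outside (cf. half_gap_tail_diff_sq).\<close>
definition tail_primitive :: "real \<Rightarrow> real \<Rightarrow> real \<Rightarrow> real" where
  "tail_primitive L K y =
     (let r = sqrt K; t = sqrt (max 0 (K - L\<^sup>2)) in
        g_primitive L K (max t (min y r)) + g_primitive L K (max (-r) (min y (-t)))
        + max 0 (y - r) - max 0 (- y - r))"

lemma has_integral_half_gap_tail:
  fixes L K a b :: real
  assumes L: "0 < L" and K: "0 < K" and ab: "a \<le> b"
  shows "((\<lambda>y. half_gap_tail L (K - y\<^sup>2)) has_integral tail_primitive L K b - tail_primitive L K a) {a..b}"
proof -
  define r where "r = sqrt K"
  define t where "t = sqrt (max 0 (K - L\<^sup>2))"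
  have r: "0 < r" using K by (simp add: r_def)
  have t: "0 \<le> t" "t < r"
    using K L by (auto simp: t_def r_def max_def)
  have tail: "tail_primitive L K = (\<lambda>y. g_primitive L K (max t (min y r))
      + g_primitive L K (max (-r) (min y (-t))) + max 0 (y - r) - max 0 (- y - r))"
    by (simp add: tail_primitive_def[abs_def] Let_def r_def t_def)
  have G: "continuous_on {-r..r} (g_primitive L K)"
    unfolding r_def using K L by (intro continuous_on_g_primitive) auto
  have G': "(g_primitive L K has_real_derivative (1 - sqrt (K - u\<^sup>2) / L)\<^sup>2) (at u)" if "\<bar>u\<bar> < r" for u
    using that L unfolding r_def by (intro DERIV_g_primitive) auto
  show ?thesis
  proof (rule fundamental_theorem_of_calculus_interior_strong[where S = "{-r, -t, t, r}"])
    show "continuous_on {a..b} (tail_primitive L K)"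
      unfolding tail using t
      by (intro continuous_intros continuous_on_clamp_comp continuous_on_subset[OF G]) auto
    fix x assume x: "x \<in> {a<..<b} - {-r, -t, t, r}"
    have "(tail_primitive L K has_real_derivative
        (if t < x \<and> x < r then (1 - sqrt (K - x\<^sup>2) / L)\<^sup>2 else 0)
        + (if -r < x \<and> x < -t then (1 - sqrt (K - x\<^sup>2) / L)\<^sup>2 else 0)
        + (if 0 < x - r then 1 else 0) - (if 0 < - x - r then - 1 else 0)) (at x)"
      (is "(_ has_real_derivative ?D) _")
      unfolding tail using x t
      by (intro DERIV_add DERIV_diff DERIV_clamp_comp DERIV_max_zero G')
         (auto intro!: derivative_eq_intros)
    moreover have "?D = half_gap_tail L (K - x\<^sup>2)"
      using x t unfolding half_gap_tail_diff_sq[OF L] r_def[symmetric] t_def[symmetric]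
      by (auto simp: abs_if)
    ultimately show "(tail_primitive L K has_vector_derivative half_gap_tail L (K - x\<^sup>2)) (at x)"
      by (simp add: has_real_derivative_iff_has_vector_derivative)
  qed (use ab in auto)
qed

lemma tail_primitive_mono:
  assumes "0 < L" "0 < K" "a \<le> b"
  shows "tail_primitive L K a \<le> tail_primitive L K b"
  using has_integral_nonneg[OF has_integral_half_gap_tail[OF assms] half_gap_tail_nonneg] by simp

lemma tail_primitive_symmetric_diff:
  fixes L K Ly :: real
  assumes L: "0 < L" and K: "0 < K" and Ly: "0 < Ly"
  defines "th2 \<equiv> min Ly (sqrt K)" and "th3 \<equiv> sqrt (max 0 (K - L\<^sup>2))"
  shows "tail_primitive L K Ly - tail_primitive L K (-Ly)
           = 2 * (Ly - th2 + (if th3 \<le> th2 then g_primitive L K th2 - g_primitive L K th3 else 0))"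
proof -
  define r where "r = sqrt K"
  define c where "c = max th3 (min Ly r)"
  have r: "0 < r" using K by (simp add: r_def)
  have th3: "0 \<le> th3" "th3 \<le> r"
    using K L by (auto simp: th3_def r_def max_def)
  have odd: "g_primitive L K (-u) = - g_primitive L K u" if "0 \<le> u" "u \<le> r" for u
    using that by (intro g_primitive_minus) (simp add: r_def)
  have tail: "tail_primitive L K y = g_primitive L K (max th3 (min y r))
      + g_primitive L K (max (-r) (min y (-th3))) + max 0 (y - r) - max 0 (- y - r)" for y
    unfolding tail_primitive_def Let_def r_def th3_def ..
  have "max (-r) (min Ly (-th3)) = -th3" "max (-r) (min (-Ly) (-th3)) = -c"
    "max th3 (min (-Ly) r) = th3"
    using Ly th3 by (auto simp: c_def)
  moreover have "0 \<le> c" "c \<le> r"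
    using th3 by (auto simp: c_def)
  ultimately have "tail_primitive L K Ly = g_primitive L K c - g_primitive L K th3 + max 0 (Ly - r)"
    and "tail_primitive L K (-Ly) = g_primitive L K th3 - g_primitive L K c - max 0 (Ly - r)"
    using Ly r th3 odd by (simp_all add: tail c_def[symmetric])
  moreover have "g_primitive L K c - g_primitive L K th3 + max 0 (Ly - r)
      = Ly - th2 + (if th3 \<le> th2 then g_primitive L K th2 - g_primitive L K th3 else 0)"
    using th3 by (cases "Ly \<le> th3"; cases "Ly \<le> r") (auto simp: c_def th2_def r_def)
  ultimately show ?thesis by simp
qed

lemma nn_integral_uniform_half_gap_tail_diff_sq:
  fixes L K Ly :: real
  assumes L: "0 < L" and K: "0 < K" and Ly: "0 < Ly"
  shows "(\<integral>\<^sup>+y. half_gap_tail L (K - y\<^sup>2) \<partial>uniform_measure lborel {-Ly..Ly})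
           = ennreal ((tail_primitive L K Ly - tail_primitive L K (-Ly)) / (2 * Ly))"
proof -
  have int: "((\<lambda>y. half_gap_tail L (K - y\<^sup>2)) has_integral tail_primitive L K Ly - tail_primitive L K (-Ly)) {-Ly..Ly}"
    using Ly by (intro has_integral_half_gap_tail L K) simp
  have "(\<integral>\<^sup>+y. half_gap_tail L (K - y\<^sup>2) \<partial>uniform_measure lborel {-Ly..Ly})
      = (\<integral>\<^sup>+y. ennreal (half_gap_tail L (K - y\<^sup>2)) * indicator {-Ly..Ly} y \<partial>lborel) / emeasure lborel {-Ly..Ly}"
    by (rule nn_integral_uniform_measure) (auto simp: half_gap_tail_def)
  also have "(\<integral>\<^sup>+y. ennreal (half_gap_tail L (K - y\<^sup>2)) * indicator {-Ly..Ly} y \<partial>lborel)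
      = ennreal (tail_primitive L K Ly - tail_primitive L K (-Ly))"
    by (rule nn_integral_has_integral_lebesgue'[OF half_gap_tail_nonneg int])
  also have "\<dots> / emeasure lborel {-Ly..Ly} = ennreal ((tail_primitive L K Ly - tail_primitive L K (-Ly)) / (2 * Ly))"
    using Ly tail_primitive_mono[OF L K, of "-Ly" Ly] by (simp add: divide_ennreal)
  finally show ?thesis .
qed

lemma enn2real_nn_integral_uniform_half_gap_tail:
  fixes L K Ly :: real
  assumes L: "0 < L" and Ly: "0 < Ly"
  defines "th2 \<equiv> min Ly (sqrt K)" and "th3 \<equiv> sqrt (max 0 (K - L\<^sup>2))"
  shows "enn2real (\<integral>\<^sup>+y. half_gap_tail L (K - y\<^sup>2) \<partial>uniform_measure lborel {-Ly..Ly})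
           = (if 0 < K
              then (Ly - th2 + (if th3 \<le> th2 then g_primitive L K th2 - g_primitive L K th3 else 0)) / Ly
              else 1)"
proof (cases "0 < K")
  case True
  have "0 \<le> (tail_primitive L K Ly - tail_primitive L K (-Ly)) / (2 * Ly)"
    using tail_primitive_mono[OF L True, of "-Ly" Ly] Ly by simp
  then have "enn2real (\<integral>\<^sup>+y. half_gap_tail L (K - y\<^sup>2) \<partial>uniform_measure lborel {-Ly..Ly})
      = (tail_primitive L K Ly - tail_primitive L K (-Ly)) / (2 * Ly)"
    by (simp add: nn_integral_uniform_half_gap_tail_diff_sq[OF L True Ly])
  also have "\<dots> = (Ly - th2 + (if th3 \<le> th2 then g_primitive L K th2 - g_primitive L K th3 else 0)) / Ly"
    unfolding th2_def th3_def
    by (simp only: tail_primitive_symmetric_diff[OF L True Ly] mult_divide_mult_cancel_left_if) simp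
  finally show ?thesis
    using True by simp
next
  case False
  interpret prob_space "uniform_measure lborel {-Ly..Ly}"
    using Ly by (intro prob_space_uniform_measure) auto
  have "K - y\<^sup>2 \<le> 0" for y
    using False zero_le_power2[of y] by linarith
  then show ?thesis
    using False emeasure_space_1 by (simp add: half_gap_tail_def)
qed

lemma antenna_offset_sq:
  assumes "m \<in> {1, 2}"
  shows "((xpos 1 \<omega> + xpos 2 \<omega>) / 2 - xpos m \<omega>)\<^sup>2 = ((xpos 1 \<omega> - xpos 2 \<omega>) / 2)\<^sup>2"
  using assms by (auto simp: power2_eq_square algebra_simps)

lemma measurable_ypos:
  assumes "m \<in> {1, 2}" and [measurable_cong]: "sets B = sets lborel" "sets D = sets lborel"
  shows "ypos m \<in> borel_measurable (A \<Otimes>\<^sub>M (B \<Otimes>\<^sub>M (C \<Otimes>\<^sub>M D)))"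
proof -
  have "ypos m = (\<lambda>\<omega>. fst (snd \<omega>)) \<or> ypos m = (\<lambda>\<omega>. snd (snd (snd \<omega>)))"
    using assms(1) by (auto simp: ypos_def fun_eq_iff split: prod.splits)
  then show ?thesis
    by (elim disjE; simp only:; measurable)
qed

lemma nn_integral_select_ypos:
  fixes f :: "real \<Rightarrow> real \<Rightarrow> real \<Rightarrow> ennreal"
  assumes M: "prob_space M" and N: "prob_space N" and m: "m \<in> {1, 2}"
    and f: "\<And>a. (\<lambda>(c, e). f a e c) \<in> borel_measurable (M \<Otimes>\<^sub>M N)"
  shows "(\<integral>\<^sup>+a. \<integral>\<^sup>+b. \<integral>\<^sup>+c. \<integral>\<^sup>+e. f a (ypos m (a, b, c, e)) c \<partial>N \<partial>M \<partial>N \<partial>M)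
           = (\<integral>\<^sup>+a. \<integral>\<^sup>+y. \<integral>\<^sup>+c. f a y c \<partial>M \<partial>N \<partial>M)"
proof -
  interpret M: prob_space M by (rule M)
  interpret N: prob_space N by (rule N)
  interpret pair_sigma_finite M N ..
  consider "m = 1" | "m = 2" using m by blast
  then show ?thesis
  proof cases
    case 1
    then show ?thesis by (simp add: ypos_def N.emeasure_space_1)
  next
    case 2
    have "(\<integral>\<^sup>+c. \<integral>\<^sup>+e. f a e c \<partial>N \<partial>M) = (\<integral>\<^sup>+e. \<integral>\<^sup>+c. f a e c \<partial>M \<partial>N)" for a
      by (rule Fubini'[symmetric]) (use f in simp)
    with 2 show ?thesis by (simp add: ypos_def N.emeasure_space_1)
  qed
qed

lemma emeasure_outage_event:
  fixes L Ly K :: real and m :: nat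
  assumes L: "0 < L" and Ly: "0 < Ly" and m: "m \<in> {1, 2}"
  defines "Ux \<equiv> uniform_measure lborel {-L..L}" and "Uy \<equiv> uniform_measure lborel {-Ly..Ly}"
  shows "emeasure (Ux \<Otimes>\<^sub>M (Uy \<Otimes>\<^sub>M (Ux \<Otimes>\<^sub>M Uy)))
           {\<omega>. K \<le> ((xpos 1 \<omega> - xpos 2 \<omega>) / 2)\<^sup>2 + (ypos m \<omega>)\<^sup>2}
         = (\<integral>\<^sup>+y. half_gap_tail L (K - y\<^sup>2) \<partial>Uy)"
proof -
  interpret Ux: prob_space Ux
    unfolding Ux_def using L by (intro prob_space_uniform_measure) auto
  interpret Uy: prob_space Uy
    unfolding Uy_def using Ly by (intro prob_space_uniform_measure) auto
  interpret pair_sigma_finite Ux Uy ..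
  have [measurable_cong]: "sets Ux = sets lborel" "sets Uy = sets lborel"
    by (simp_all add: Ux_def Uy_def)
  then have [measurable]: "ypos m \<in> borel_measurable (Ux \<Otimes>\<^sub>M (Uy \<Otimes>\<^sub>M (Ux \<Otimes>\<^sub>M Uy)))"
    by (intro measurable_ypos m)
  define E where "E = {\<omega>. K \<le> ((xpos 1 \<omega> - xpos 2 \<omega>) / 2)\<^sup>2 + (ypos m \<omega>)\<^sup>2}"
  define \<phi> where "\<phi> a y c = (of_bool (K - y\<^sup>2 \<le> ((a - c) / 2)\<^sup>2) :: ennreal)" for a y c :: real
  have indicator_E: "indicator E = (\<lambda>\<omega>. \<phi> (fst \<omega>) (ypos m \<omega>) (fst (snd (snd \<omega>))))"
    by (auto simp: E_def \<phi>_def xpos_def split: prod.splits split_indicator)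
  have E_meas: "(indicator E :: _ \<Rightarrow> ennreal) \<in> borel_measurable (Ux \<Otimes>\<^sub>M (Uy \<Otimes>\<^sub>M (Ux \<Otimes>\<^sub>M Uy)))"
    unfolding indicator_E \<phi>_def by measurable
  have "emeasure (Ux \<Otimes>\<^sub>M (Uy \<Otimes>\<^sub>M (Ux \<Otimes>\<^sub>M Uy))) E = (\<integral>\<^sup>+\<omega>. indicator E \<omega> \<partial>(Ux \<Otimes>\<^sub>M (Uy \<Otimes>\<^sub>M (Ux \<Otimes>\<^sub>M Uy))))"
    using E_meas by (simp add: borel_measurable_indicator_iff space_pair_measure Ux_def Uy_def)
  also have "\<dots> = (\<integral>\<^sup>+a. \<integral>\<^sup>+b. \<integral>\<^sup>+c. \<integral>\<^sup>+e. \<phi> a (ypos m (a, b, c, e)) c \<partial>Uy \<partial>Ux \<partial>Uy \<partial>Ux)"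
    unfolding nn_integral_nested_pair_measure[OF Uy.sigma_finite_measure_axioms
        Ux.sigma_finite_measure_axioms Uy.sigma_finite_measure_axioms E_meas]
    by (simp add: indicator_E)
  also have "\<dots> = (\<integral>\<^sup>+a. \<integral>\<^sup>+y. \<integral>\<^sup>+c. \<phi> a y c \<partial>Ux \<partial>Uy \<partial>Ux)"
    by (rule nn_integral_select_ypos[OF Ux.prob_space_axioms Uy.prob_space_axioms m])
       (unfold \<phi>_def, measurable)
  also have "\<dots> = (\<integral>\<^sup>+y. \<integral>\<^sup>+a. \<integral>\<^sup>+c. \<phi> a y c \<partial>Ux \<partial>Ux \<partial>Uy)"
    by (rule Fubini'[symmetric]) (unfold \<phi>_def, measurable)
  also have "\<dots> = (\<integral>\<^sup>+y. half_gap_tail L (K - y\<^sup>2) \<partial>Uy)"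
    unfolding \<phi>_def Ux_def by (simp only: nn_integral_uniform_half_gap_tail[OF L])
  finally show ?thesis unfolding E_def .
qed

lemma outage_prob_eq_nn_integral:
  fixes DL DW d eta sigma2 R Pbar :: real and m :: nat
  defines "eps \<equiv> sigma2 / eta * (exp (2 * R) - 1)"
  assumes DL: "0 < DL" and DW: "0 < DW" and eps: "0 < eps" and m: "m \<in> {1, 2}"
  shows "outage_prob DL DW d eta sigma2 R Pbar m
           = enn2real (\<integral>\<^sup>+y. half_gap_tail (DL / 2) (Pbar / eps - d\<^sup>2 - y\<^sup>2) \<partial>uniform_measure lborel {-(DW / 2)..DW / 2})"
proof -
  let ?P = "user_space DL DW"
  have P: "?P = uniform_measure lborel {-(DL / 2)..DL / 2} \<Otimes>\<^sub>M (uniform_measure lborel {-(DW / 2)..DW / 2}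
      \<Otimes>\<^sub>M (uniform_measure lborel {-(DL / 2)..DL / 2} \<Otimes>\<^sub>M uniform_measure lborel {-(DW / 2)..DW / 2}))"
    by (simp add: user_space_def Let_def)
  have "Pbar \<le> eps * ((xpos 1 \<omega> + xpos 2 \<omega>) / 2 - xpos m \<omega>)\<^sup>2 + eps * ((ypos m \<omega>)\<^sup>2 + d\<^sup>2)
      \<longleftrightarrow> Pbar / eps - d\<^sup>2 \<le> ((xpos 1 \<omega> - xpos 2 \<omega>) / 2)\<^sup>2 + (ypos m \<omega>)\<^sup>2" for \<omega>
    unfolding antenna_offset_sq[OF m] using eps by (simp add: divide_le_eq algebra_simps)
  then have "outage_prob DL DW d eta sigma2 R Pbar m
      = enn2real (emeasure ?P {\<omega>. Pbar / eps - d\<^sup>2 \<le> ((xpos 1 \<omega> - xpos 2 \<omega>) / 2)\<^sup>2 + (ypos m \<omega>)\<^sup>2})"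
    unfolding outage_prob_def Let_def eps_def[symmetric] by (simp add: P space_pair_measure measure_def)
  also have "emeasure ?P {\<omega>. Pbar / eps - d\<^sup>2 \<le> ((xpos 1 \<omega> - xpos 2 \<omega>) / 2)\<^sup>2 + (ypos m \<omega>)\<^sup>2}
      = (\<integral>\<^sup>+y. half_gap_tail (DL / 2) (Pbar / eps - d\<^sup>2 - y\<^sup>2) \<partial>uniform_measure lborel {-(DW / 2)..DW / 2})"
    unfolding P by (rule emeasure_outage_event) (use DL DW m in auto)
  finally show ?thesis .
qed

lemma gfun_eq_g_primitive:
  assumes "0 < DL"
  shows "gfun DL (4 / DL\<^sup>2 * K) t2 t3 K y = (if t3 \<le> t2 then g_primitive (DL / 2) K y else 0)"
  using assms by (simp add: gfun_def g_primitive_def field_simps power2_eq_square)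

theorem lemma2:
  fixes DL DW d eta sigma2 R Pbar :: real and m :: nat
  assumes "DL > 0" "DW > 0" "d > 0" "eta > 0" "sigma2 > 0" "R > 0" "Pbar > 0"
    and "m \<in> {1, 2}"
  shows "let eps = sigma2 / eta * (exp (2 * R) - 1);
             th1 = 4 / DL\<^sup>2 * (Pbar / eps - d\<^sup>2);
             th2 = min (DW / 2) (sqrt (DL\<^sup>2 / 4 * th1));
             th3 = sqrt (max 0 (DL\<^sup>2 / 4 * (th1 - 1)));
             th4 = DL\<^sup>2 / 4 * th1;
             g = gfun DL th1 th2 th3 th4
         in outage_prob DL DW d eta sigma2 R Pbar m =
              (if Pbar / eps > d\<^sup>2 then
                 2 / DW * (DW / 2 - min (DW / 2) (sqrt (th1 * DL\<^sup>2 / 4)))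
                 + 2 / DW * (g th2 - g th3)
               else 1)"
proof -
  define eps where "eps = sigma2 / eta * (exp (2 * R) - 1)"
  define K where "K = Pbar / eps - d\<^sup>2"
  define L where "L = DL / 2"
  define Ly where "Ly = DW / 2"
  have L: "0 < L" and Ly: "0 < Ly"
    using assms by (simp_all add: L_def Ly_def)
  have params: "4 / DL\<^sup>2 * K * DL\<^sup>2 / 4 = K" "DL\<^sup>2 / 4 * (4 / DL\<^sup>2 * K) = K"
    "DL\<^sup>2 / 4 * (4 / DL\<^sup>2 * K - 1) = K - L\<^sup>2" "DW / 2 = Ly" "2 / DW = 1 / Ly"
    using assms by (simp_all add: L_def Ly_def field_simps power2_eq_square)
  have K_pos: "0 < K \<longleftrightarrow> d\<^sup>2 < Pbar / eps"
    by (simp add: K_def)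
  have "outage_prob DL DW d eta sigma2 R Pbar m
      = enn2real (\<integral>\<^sup>+y. half_gap_tail L (K - y\<^sup>2) \<partial>uniform_measure lborel {-Ly..Ly})"
    unfolding K_def L_def Ly_def eps_def
    by (rule outage_prob_eq_nn_integral) (use assms in auto)
  also have "\<dots> = (if 0 < K then (Ly - min Ly (sqrt K) + (if sqrt (max 0 (K - L\<^sup>2)) \<le> min Ly (sqrt K)
      then g_primitive L K (min Ly (sqrt K)) - g_primitive L K (sqrt (max 0 (K - L\<^sup>2))) else 0)) / Ly else 1)"
    by (rule enn2real_nn_integral_uniform_half_gap_tail[OF L Ly])
  finally show ?thesis
    unfolding Let_def eps_def[symmetric] K_def[symmetric] params gfun_eq_g_primitive[OF assms(1)]
    unfolding L_def[symmetric]
    by (simp add: K_pos add_divide_distrib diff_divide_distrib)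
qed

end
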